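(* There exist nonatomic routing games with affine cost functions (i.e., $c_e(x)=t_e+a_ex$ with $t_e,a_e\in\mathbb{R}_+$) that do not admit a non-negative demand-independent optimal toll (DIOT).
   Context: A nonatomic routing game consists of a finite directed multigraph $\mathcal{G}=(\mathcal{V},\mathcal{E})$, a finite set $\mathcal{I}$ of origin-destination pairs $i$ with origin $o^i$ and destination $d^i$, and nondecreasing continuous cost functions $c_e:\mathbb{R}_+\to\mathbb{R}_+$. $\mathcal{P}^i$ is the set of simple $o^i$–$d^i$ paths. For a demand vector $\boldsymbol{\mu}\in\mathbb{R}_+^{\mathcal{I}}$, feasible flows are $\boldsymbol{f}\in\mathbb{R}_+^{\mathcal{P}}$ with $\sum_{p\in\mathcal{P}^i}f_p=\mu^i$; loads $x_e=\sum_{p\ni e}f_p$; path costs $c_p=\sum_{e\in p}c_e(x_e)$. A Wardrop equilibrium is a feasible flow where every used path of each pair $i$ has cost at most that of any other path in $\mathcal{P}^i$. The total cost is $L(\boldsymbol{f})=\sum_p f_pc_p(\boldsymbol{f})$; a system optimum minimizes $L$ over feasible flows. For a toll vector $\boldsymbol{\tau}\in\mathbb{R}^{\mathcal{E}}$, the tolled game has edge costs $c_e(x)+\tau_e$. $\boldsymbol{\tau}$ is a DIOT if for every demand vector $\boldsymbol{\mu}\in\mathbb{R}_+^{\mathcal{I}}$ every Wardrop equilibrium of the tolled game with demand $\boldsymbol{\mu}$ is a system optimum of the untolled game for demand $\boldsymbol{\mu}$. It is non-negative if $\tau_e\ge0$ for all $e$. *)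

theory Defs
  imports "HOL-Analysis.Analysis"
begin

text \<open>Vertices and edges are
represented by natural numbers; an edge e has tail src e and head tgt e, and the
edge set is a finite set E. OD pairs are a finite index set I of naturals, with
origins orig i and destinations dest i. Paths are lists of edges.\<close>

fun is_walk :: "nat set \<Rightarrow> (nat \<Rightarrow> nat) \<Rightarrow> (nat \<Rightarrow> nat) \<Rightarrow> nat \<Rightarrow> nat list \<Rightarrow> nat \<Rightarrow> bool" where
  "is_walk E src tgt u [] v = (u = v)"
| "is_walk E src tgt u (e # es) v = (e \<in> E \<and> src e = u \<and> is_walk E src tgt (tgt e) es v)"

fun walk_verts :: "(nat \<Rightarrow> nat) \<Rightarrow> nat \<Rightarrow> nat list \<Rightarrow> nat list" where
  "walk_verts tgt u [] = [u]"
| "walk_verts tgt u (e # es) = u # walk_verts tgt (tgt e) es"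

definition simple_path :: "nat set \<Rightarrow> (nat \<Rightarrow> nat) \<Rightarrow> (nat \<Rightarrow> nat) \<Rightarrow> nat \<Rightarrow> nat list \<Rightarrow> nat \<Rightarrow> bool" where
  "simple_path E src tgt u p v \<longleftrightarrow> is_walk E src tgt u p v \<and> distinct (walk_verts tgt u p)"

definition paths :: "nat set \<Rightarrow> (nat \<Rightarrow> nat) \<Rightarrow> (nat \<Rightarrow> nat) \<Rightarrow> (nat \<Rightarrow> nat) \<Rightarrow> (nat \<Rightarrow> nat) \<Rightarrow> nat \<Rightarrow> nat list set" where
  "paths E src tgt orig dest i = {p. simple_path E src tgt (orig i) p (dest i)}"

definition feasible :: "nat set \<Rightarrow> (nat \<Rightarrow> nat) \<Rightarrow> (nat \<Rightarrow> nat) \<Rightarrow> nat set \<Rightarrow> (nat \<Rightarrow> nat) \<Rightarrow> (nat \<Rightarrow> nat)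
    \<Rightarrow> (nat \<Rightarrow> real) \<Rightarrow> (nat \<Rightarrow> nat list \<Rightarrow> real) \<Rightarrow> bool" where
  "feasible E src tgt I orig dest \<mu> f \<longleftrightarrow>
     (\<forall>i\<in>I. (\<forall>p\<in>paths E src tgt orig dest i. 0 \<le> f i p)
          \<and> (\<Sum>p\<in>paths E src tgt orig dest i. f i p) = \<mu> i)"

definition load :: "nat set \<Rightarrow> (nat \<Rightarrow> nat) \<Rightarrow> (nat \<Rightarrow> nat) \<Rightarrow> nat set \<Rightarrow> (nat \<Rightarrow> nat) \<Rightarrow> (nat \<Rightarrow> nat)
    \<Rightarrow> (nat \<Rightarrow> nat list \<Rightarrow> real) \<Rightarrow> nat \<Rightarrow> real" where
  "load E src tgt I orig dest f e =
     (\<Sum>i\<in>I. \<Sum>p\<in>{p \<in> paths E src tgt orig dest i. e \<in> set p}. f i p)"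

definition path_cost :: "nat set \<Rightarrow> (nat \<Rightarrow> nat) \<Rightarrow> (nat \<Rightarrow> nat) \<Rightarrow> nat set \<Rightarrow> (nat \<Rightarrow> nat) \<Rightarrow> (nat \<Rightarrow> nat)
    \<Rightarrow> (nat \<Rightarrow> real \<Rightarrow> real) \<Rightarrow> (nat \<Rightarrow> nat list \<Rightarrow> real) \<Rightarrow> nat list \<Rightarrow> real" where
  "path_cost E src tgt I orig dest c f p =
     sum_list (map (\<lambda>e. c e (load E src tgt I orig dest f e)) p)"

definition wardrop :: "nat set \<Rightarrow> (nat \<Rightarrow> nat) \<Rightarrow> (nat \<Rightarrow> nat) \<Rightarrow> nat set \<Rightarrow> (nat \<Rightarrow> nat) \<Rightarrow> (nat \<Rightarrow> nat)
    \<Rightarrow> (nat \<Rightarrow> real \<Rightarrow> real) \<Rightarrow> (nat \<Rightarrow> real) \<Rightarrow> (nat \<Rightarrow> nat list \<Rightarrow> real) \<Rightarrow> bool" where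
  "wardrop E src tgt I orig dest c \<mu> f \<longleftrightarrow>
     feasible E src tgt I orig dest \<mu> f \<and>
     (\<forall>i\<in>I. \<forall>p\<in>paths E src tgt orig dest i. 0 < f i p \<longrightarrow>
        (\<forall>q\<in>paths E src tgt orig dest i.
           path_cost E src tgt I orig dest c f p \<le> path_cost E src tgt I orig dest c f q))"

definition total_cost :: "nat set \<Rightarrow> (nat \<Rightarrow> nat) \<Rightarrow> (nat \<Rightarrow> nat) \<Rightarrow> nat set \<Rightarrow> (nat \<Rightarrow> nat) \<Rightarrow> (nat \<Rightarrow> nat)
    \<Rightarrow> (nat \<Rightarrow> real \<Rightarrow> real) \<Rightarrow> (nat \<Rightarrow> nat list \<Rightarrow> real) \<Rightarrow> real" where
  "total_cost E src tgt I orig dest c f =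
     (\<Sum>i\<in>I. \<Sum>p\<in>paths E src tgt orig dest i. f i p * path_cost E src tgt I orig dest c f p)"

definition system_optimum :: "nat set \<Rightarrow> (nat \<Rightarrow> nat) \<Rightarrow> (nat \<Rightarrow> nat) \<Rightarrow> nat set \<Rightarrow> (nat \<Rightarrow> nat) \<Rightarrow> (nat \<Rightarrow> nat)
    \<Rightarrow> (nat \<Rightarrow> real \<Rightarrow> real) \<Rightarrow> (nat \<Rightarrow> real) \<Rightarrow> (nat \<Rightarrow> nat list \<Rightarrow> real) \<Rightarrow> bool" where
  "system_optimum E src tgt I orig dest c \<mu> f \<longleftrightarrow>
     feasible E src tgt I orig dest \<mu> f \<and>
     (\<forall>g. feasible E src tgt I orig dest \<mu> g \<longrightarrow>
        total_cost E src tgt I orig dest c f \<le> total_cost E src tgt I orig dest c g)"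

definition is_DIOT :: "nat set \<Rightarrow> (nat \<Rightarrow> nat) \<Rightarrow> (nat \<Rightarrow> nat) \<Rightarrow> nat set \<Rightarrow> (nat \<Rightarrow> nat) \<Rightarrow> (nat \<Rightarrow> nat)
    \<Rightarrow> (nat \<Rightarrow> real \<Rightarrow> real) \<Rightarrow> (nat \<Rightarrow> real) \<Rightarrow> bool" where
  "is_DIOT E src tgt I orig dest c \<tau> \<longleftrightarrow>
     (\<forall>\<mu>. (\<forall>i\<in>I. 0 \<le> \<mu> i) \<longrightarrow>
        (\<forall>f. wardrop E src tgt I orig dest (\<lambda>e x. c e x + \<tau> e) \<mu> f \<longrightarrow>
             system_optimum E src tgt I orig dest c \<mu> f))"

definition affine_costs :: "nat set \<Rightarrow> (nat \<Rightarrow> real \<Rightarrow> real) \<Rightarrow> bool" where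
  "affine_costs E c \<longleftrightarrow>
     (\<exists>t a. \<forall>e\<in>E. 0 \<le> t e \<and> 0 \<le> a e \<and> (\<forall>x\<ge>0. c e x = t e + a e * x))"

end

theory Submission
  imports Defs
begin

text \<open>Take vertices 0, 1, 2, edges 0: 0\<rightarrow>1 and 1: 0\<rightarrow>2 with cost x, and edges 2: 2\<rightarrow>1 and
3: 1\<rightarrow>2 with cost 1. Pair i (i = 0, 1) goes from 0 to i + 1 and has the direct path [i] and
the detour [1 - i, i + 2]. A unit of demand of pair i alone is optimally split 3/4 : 1/4
(total cost 7/8), so a DIOT must make the all-direct flow (cost 1) a non-equilibrium, i.e.
\<open>\<tau> i > \<tau> (1 - i) + \<tau> (i + 2)\<close>. For both i together this forces \<open>\<tau> 2 + \<tau> 3 < 0\<close>.\<close>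

lemma length_walk_verts: "length (walk_verts tgt u p) = Suc (length p)"
  by (induction p arbitrary: u) auto

lemma simple_path_length_less_card:
  assumes "simple_path E src tgt u p v" and "set (walk_verts tgt u p) \<subseteq> V" and "finite V"
  shows "length p < card V"
proof -
  have "distinct (walk_verts tgt u p)"
    using assms(1) by (simp add: simple_path_def)
  then have "Suc (length p) = card (set (walk_verts tgt u p))"
    by (simp add: distinct_card length_walk_verts)
  also have "\<dots> \<le> card V"
    using assms(2,3) by (rule card_mono[rotated])
  finally show ?thesis by simp
qed

definition ex_E :: "nat set" where
  "ex_E = {0, 1, 2, 3}"

definition ex_src :: "nat \<Rightarrow> nat" where
  "ex_src e = (if e = 2 then 2 else if e = 3 then 1 else 0)"

definition ex_tgt :: "nat \<Rightarrow> nat" where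
  "ex_tgt e = (if e = 1 \<or> e = 3 then 2 else 1)"

definition ex_orig :: "nat \<Rightarrow> nat" where
  "ex_orig i = 0"

definition ex_dest :: "nat \<Rightarrow> nat" where
  "ex_dest i = Suc i"

definition ex_cost :: "nat \<Rightarrow> real \<Rightarrow> real" where
  "ex_cost e x = (if e \<le> 1 then x else 1)"

definition ex_I :: "nat set" where
  "ex_I = {0, 1}"

lemma sum_ex_I: "sum g ex_I = g 0 + g 1"
  by (simp add: ex_I_def)

lemma ex_I_cases [consumes 1]:
  "i \<in> ex_I \<Longrightarrow> (i = 0 \<Longrightarrow> P) \<Longrightarrow> (i = 1 \<Longrightarrow> P) \<Longrightarrow> P"
  by (auto simp: ex_I_def)

lemma affine_costs_ex_cost: "affine_costs ex_E ex_cost"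
  unfolding affine_costs_def ex_cost_def
  by (rule exI[of _ "\<lambda>e. if e \<le> 1 then 0 else 1"], rule exI[of _ "\<lambda>e. if e \<le> 1 then 1 else 0"])
    auto

lemma walk_verts_ex_subset:
  "is_walk ex_E ex_src ex_tgt u p v \<Longrightarrow> u \<le> 2 \<Longrightarrow> set (walk_verts ex_tgt u p) \<subseteq> {..2}"
  by (induction p arbitrary: u) (auto simp: ex_tgt_def)

lemma simple_path_ex_origin_iff:
  "simple_path ex_E ex_src ex_tgt 0 p v \<longleftrightarrow>
     (p, v) \<in> {([], 0), ([0], 1), ([1], 2), ([0, 3], 2), ([1, 2], 1)}"
proof
  assume sp: "simple_path ex_E ex_src ex_tgt 0 p v"
  moreover have "set (walk_verts ex_tgt 0 p) \<subseteq> {..2}"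
    using sp walk_verts_ex_subset[of 0 p v] by (simp add: simple_path_def)
  ultimately have "length p < card {..2::nat}"
    by (rule simple_path_length_less_card) simp
  then consider "p = []" | a where "p = [a]" | a b where "p = [a, b]"
    by (cases p; cases "tl p") auto
  then show "(p, v) \<in> {([], 0), ([0], 1), ([1], 2), ([0, 3], 2), ([1, 2], 1)}"
    using sp
    by cases (auto simp: simple_path_def ex_E_def ex_src_def ex_tgt_def split: if_splits)
qed (auto simp: simple_path_def ex_E_def ex_src_def ex_tgt_def)

lemma paths_ex:
  assumes "i \<in> ex_I"
  shows "paths ex_E ex_src ex_tgt ex_orig ex_dest i = {[i], [1 - i, i + 2]}"
  using assms
  by (auto simp: ex_I_def paths_def ex_orig_def ex_dest_def simple_path_ex_origin_iff)

lemma feasible_ex_iff: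
  "feasible ex_E ex_src ex_tgt ex_I ex_orig ex_dest \<mu> f \<longleftrightarrow>
     (\<forall>i\<in>ex_I. 0 \<le> f i [i] \<and> 0 \<le> f i [1 - i, i + 2] \<and> f i [i] + f i [1 - i, i + 2] = \<mu> i)"
  unfolding feasible_def by (simp add: paths_ex ex_I_def)

lemma load_ex:
  "load ex_E ex_src ex_tgt ex_I ex_orig ex_dest f e =
     (\<Sum>i\<in>ex_I. (if e = i then f i [i] else 0)
              + (if e = 1 - i \<or> e = i + 2 then f i [1 - i, i + 2] else 0))"
proof -
  have "load ex_E ex_src ex_tgt ex_I ex_orig ex_dest f e =
          (\<Sum>i\<in>ex_I. \<Sum>p\<in>{[i], [1 - i, i + 2]}. if e \<in> set p then f i p else 0)"
    unfolding load_def
    by (rule sum.cong[OF refl], subst paths_ex, assumption, rule sum.inter_filter) simp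
  then show ?thesis
    by (simp add: sum_ex_I eval_nat_numeral)
qed

lemma total_cost_ex:
  "total_cost ex_E ex_src ex_tgt ex_I ex_orig ex_dest c f =
     (\<Sum>i\<in>ex_I. f i [i] * path_cost ex_E ex_src ex_tgt ex_I ex_orig ex_dest c f [i]
              + f i [1 - i, i + 2] *
                  path_cost ex_E ex_src ex_tgt ex_I ex_orig ex_dest c f [1 - i, i + 2])"
  unfolding total_cost_def by (simp add: paths_ex ex_I_def)

definition unit_demand :: "nat \<Rightarrow> nat \<Rightarrow> real" where
  "unit_demand i j = (if j = i then 1 else 0)"

definition direct_flow :: "nat \<Rightarrow> nat \<Rightarrow> nat list \<Rightarrow> real" where
  "direct_flow i j p = (if j = i \<and> p = [i] then 1 else 0)"

definition split_flow :: "nat \<Rightarrow> nat \<Rightarrow> nat list \<Rightarrow> real" where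
  "split_flow i j p =
     (if j = i \<and> p = [i] then 3 / 4 else if j = i \<and> p = [1 - i, i + 2] then 1 / 4 else 0)"

lemma direct_flow_wardrop:
  assumes "i \<in> ex_I" and "\<tau> i \<le> \<tau> (1 - i) + \<tau> (i + 2)"
  shows "wardrop ex_E ex_src ex_tgt ex_I ex_orig ex_dest (\<lambda>e x. ex_cost e x + \<tau> e)
           (unit_demand i) (direct_flow i)"
  using assms
  by (cases rule: ex_I_cases)
    (auto simp: wardrop_def feasible_ex_iff paths_ex path_cost_def load_ex sum_ex_I ex_cost_def
                unit_demand_def direct_flow_def)

lemma direct_flow_not_system_optimum:
  assumes "i \<in> ex_I"
  shows "\<not> system_optimum ex_E ex_src ex_tgt ex_I ex_orig ex_dest ex_cost
             (unit_demand i) (direct_flow i)"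
proof
  have "feasible ex_E ex_src ex_tgt ex_I ex_orig ex_dest (unit_demand i) (split_flow i)"
    using assms
    by (cases rule: ex_I_cases) (auto simp: feasible_ex_iff unit_demand_def split_flow_def)
  moreover have "total_cost ex_E ex_src ex_tgt ex_I ex_orig ex_dest ex_cost (direct_flow i) = 1"
    using assms
    by (cases rule: ex_I_cases)
      (auto simp: total_cost_ex path_cost_def load_ex sum_ex_I ex_cost_def direct_flow_def)
  moreover have "total_cost ex_E ex_src ex_tgt ex_I ex_orig ex_dest ex_cost (split_flow i) = 7 / 8"
    using assms
    by (cases rule: ex_I_cases)
      (auto simp: total_cost_ex path_cost_def load_ex sum_ex_I ex_cost_def split_flow_def)
  ultimately show False
    if "system_optimum ex_E ex_src ex_tgt ex_I ex_orig ex_dest ex_cost (unit_demand i) (direct_flow i)"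
    using that unfolding system_optimum_def by fastforce
qed

lemma no_nonneg_DIOT_ex:
  assumes "\<forall>e\<in>ex_E. 0 \<le> \<tau> e"
  shows "\<not> is_DIOT ex_E ex_src ex_tgt ex_I ex_orig ex_dest ex_cost \<tau>"
proof
  assume DIOT: "is_DIOT ex_E ex_src ex_tgt ex_I ex_orig ex_dest ex_cost \<tau>"
  have "0 \<le> \<tau> 2 + \<tau> 3"
    using assms by (simp add: ex_E_def)
  then have "\<tau> 0 \<le> \<tau> 1 + \<tau> 2 \<or> \<tau> 1 \<le> \<tau> 0 + \<tau> 3"
    by linarith
  then obtain i where i: "i \<in> ex_I" and "\<tau> i \<le> \<tau> (1 - i) + \<tau> (i + 2)"
    using that[of 0] that[of 1] by (auto simp: ex_I_def eval_nat_numeral)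
  then have "wardrop ex_E ex_src ex_tgt ex_I ex_orig ex_dest (\<lambda>e x. ex_cost e x + \<tau> e)
               (unit_demand i) (direct_flow i)"
    by (rule direct_flow_wardrop)
  moreover have "\<forall>j\<in>ex_I. 0 \<le> unit_demand i j"
    by (simp add: unit_demand_def)
  ultimately have "system_optimum ex_E ex_src ex_tgt ex_I ex_orig ex_dest ex_cost
                     (unit_demand i) (direct_flow i)"
    using DIOT unfolding is_DIOT_def by blast
  with direct_flow_not_system_optimum[OF i] show False ..
qed

theorem proposition8:
  shows "\<exists>(E::nat set) (src::nat \<Rightarrow> nat) (tgt::nat \<Rightarrow> nat) (I::nat set) (orig::nat \<Rightarrow> nat)
            (dest::nat \<Rightarrow> nat) (c::nat \<Rightarrow> real \<Rightarrow> real).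
           finite E \<and> finite I \<and> affine_costs E c \<and>
           \<not> (\<exists>\<tau>::nat \<Rightarrow> real. (\<forall>e\<in>E. 0 \<le> \<tau> e) \<and> is_DIOT E src tgt I orig dest c \<tau>)"
proof (intro exI conjI)
  show "finite ex_E" and "finite ex_I"
    by (simp_all add: ex_E_def ex_I_def)
  show "affine_costs ex_E ex_cost"
    by (rule affine_costs_ex_cost)
  show "\<not> (\<exists>\<tau>. (\<forall>e\<in>ex_E. 0 \<le> \<tau> e) \<and> is_DIOT ex_E ex_src ex_tgt ex_I ex_orig ex_dest ex_cost \<tau>)"
    using no_nonneg_DIOT_ex by blast
qed

end
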